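(* Let $U\subseteq\mathbb{R}^4$ be open with coordinates $(x^1,x^2,x^3,x^4)$ and let $a,b,p,q,s$ be real constants with $a^2+b^2\neq0$. Consider the Lorentzian metric $$g=2\,dx^1dx^4+(dx^2)^2+(dx^3)^2+\Big(x^4\big(a(x^2)^2+b(x^3)^2\big)+p(x^2)^2+2qx^2x^3+s(x^3)^2\Big)(dx^4)^2$$ on $U$. Then for every real constant $\lambda$ (positive, zero or negative) there exists a smooth vector field $V$ on $U$ such that $\mathcal{L}_Vg+\varrho=\lambda g$. In particular $(U,g)$ is a shrinking, a steady and an expanding Ricci soliton.
   Context: $\mathcal{L}_V$ denotes the Lie derivative and $\varrho$ the Ricci tensor, $\varrho(Y,Z)=\operatorname{tr}(X\mapsto R(X,Z)Y)$ with $R(X,Y)=[\nabla_X,\nabla_Y]-\nabla_{[X,Y]}$. A Ricci soliton $(M,g,V,\lambda)$, i.e. $\mathcal{L}_Vg+\varrho=\lambda g$ with $\lambda\in\mathbb{R}$, is called shrinking, steady or expanding according as $\lambda>0$, $\lambda=0$ or $\lambda<0$. *)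

theory Defs
  imports "HOL-Analysis.Analysis"
begin

text \<open>Coordinates on R^4 are indexed by the numeral type 4; the paper's
index 4 is the element 4 = 0 of that type, so x$1, x$2, x$3, x$4 are the
four distinct coordinates.\<close>

definition partial :: "4 \<Rightarrow> (real^4 \<Rightarrow> real) \<Rightarrow> real^4 \<Rightarrow> real" where
  "partial i f x = deriv (\<lambda>t. f (x + t *\<^sub>R axis i 1)) 0"

fun Ck :: "nat \<Rightarrow> (real^4) set \<Rightarrow> (real^4 \<Rightarrow> real) \<Rightarrow> bool" where
  "Ck 0 U f = continuous_on U f"
| "Ck (Suc k) U f = (continuous_on U f \<and>
      (\<forall>i. \<forall>x\<in>U. (\<lambda>t. f (x + t *\<^sub>R axis i 1)) differentiable (at 0)) \<and>
      (\<forall>i. Ck k U (partial i f)))"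

definition smooth_on :: "(real^4) set \<Rightarrow> (real^4 \<Rightarrow> real) \<Rightarrow> bool" where
  "smooth_on U f = (\<forall>k. Ck k U f)"

definition metric_inv :: "(real^4 \<Rightarrow> real^4^4) \<Rightarrow> real^4 \<Rightarrow> real^4^4" where
  "metric_inv g x = matrix_inv (g x)"

definition christoffel :: "(real^4 \<Rightarrow> real^4^4) \<Rightarrow> 4 \<Rightarrow> 4 \<Rightarrow> 4 \<Rightarrow> real^4 \<Rightarrow> real" where
  "christoffel g k i j x = (1/2) * (\<Sum>l\<in>UNIV. metric_inv g x $ k $ l *
      (partial i (\<lambda>y. g y $ j $ l) x + partial j (\<lambda>y. g y $ i $ l) x
       - partial l (\<lambda>y. g y $ i $ j) x))"

text \<open>riemann g l i j k x is the d_l-component of R(d_i,d_j)d_k, where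
R(X,Y) = [nabla_X, nabla_Y] - nabla_[X,Y].\<close>
definition riemann :: "(real^4 \<Rightarrow> real^4^4) \<Rightarrow> 4 \<Rightarrow> 4 \<Rightarrow> 4 \<Rightarrow> 4 \<Rightarrow> real^4 \<Rightarrow> real" where
  "riemann g l i j k x = partial i (christoffel g l j k) x - partial j (christoffel g l i k) x
     + (\<Sum>m\<in>UNIV. christoffel g m j k x * christoffel g l i m x
                - christoffel g m i k x * christoffel g l j m x)"

text \<open>rho(d_j,d_k) = tr(X |-> R(X,d_k)d_j).\<close>
definition ricci :: "(real^4 \<Rightarrow> real^4^4) \<Rightarrow> real^4 \<Rightarrow> real^4^4" where
  "ricci g x = (\<chi> j k. \<Sum>i\<in>UNIV. riemann g i i k j x)"

definition lie_deriv :: "(real^4 \<Rightarrow> real^4) \<Rightarrow> (real^4 \<Rightarrow> real^4^4) \<Rightarrow> real^4 \<Rightarrow> real^4^4" where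
  "lie_deriv V g x = (\<chi> i j. \<Sum>k\<in>UNIV.
      V x $ k * partial k (\<lambda>y. g y $ i $ j) x
      + g x $ k $ j * partial i (\<lambda>y. V y $ k) x
      + g x $ i $ k * partial j (\<lambda>y. V y $ k) x)"

definition soliton_metric :: "real \<Rightarrow> real \<Rightarrow> real \<Rightarrow> real \<Rightarrow> real \<Rightarrow> real^4 \<Rightarrow> real^4^4" where
  "soliton_metric a b p q s x = (\<chi> i j.
      if (i = 1 \<and> j = 4) \<or> (i = 4 \<and> j = 1) then 1
      else if i = j \<and> (i = 2 \<or> i = 3) then 1
      else if i = 4 \<and> j = 4 then
        x$4 * (a * (x$2)^2 + b * (x$3)^2) + p * (x$2)^2 + 2 * q * x$2 * x$3 + s * (x$3)^2
      else 0)"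

end

theory Submission
  imports Defs
begin

text \<open>The metric is a Walker metric whose only non-constant entry is \<open>g\<^sub>4\<^sub>4 = F\<close>. Its
Christoffel symbols are \<open>\<Gamma>\<^sup>1\<^sub>i\<^sub>4 = \<partial>\<^sub>iF/2\<close> (\<open>i = 2, 3, 4\<close>) and \<open>\<Gamma>\<^sup>2\<^sub>4\<^sub>4 = -\<partial>\<^sub>2F/2\<close>, \<open>\<Gamma>\<^sup>3\<^sub>4\<^sub>4 = -\<partial>\<^sub>3F/2\<close>, so the
Ricci tensor has the single entry \<open>\<rho>\<^sub>4\<^sub>4 = -(\<partial>\<^sub>2\<^sub>2F + \<partial>\<^sub>3\<^sub>3F)/2 = -((a + b) x\<^sub>4 + p + s)\<close>.
Take \<open>V = \<lambda> (x\<^sub>1\<partial>\<^sub>1 + x\<^sub>2\<partial>\<^sub>2/2 + x\<^sub>3\<partial>\<^sub>3/2) + ((a + b) x\<^sub>4\<^sup>2/4 + (p + s) x\<^sub>4/2) \<partial>\<^sub>1\<close>.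
As \<open>F\<close> is quadratic in \<open>(x\<^sub>2, x\<^sub>3)\<close> and \<open>V\<close> has no \<open>\<partial>\<^sub>4\<close>-component, Euler's identity
\<open>x\<^sub>2\<partial>\<^sub>2F + x\<^sub>3\<partial>\<^sub>3F = 2F\<close> shows that the first part satisfies \<open>\<L>\<^sub>Vg = \<lambda>g\<close>, while the second
part adds \<open>2\<partial>\<^sub>4V\<^sup>1 = (a + b) x\<^sub>4 + p + s\<close> to the \<open>44\<close>-entry, cancelling \<open>\<rho>\<close>.\<close>

lemma partial_eqI:
  "((\<lambda>t. f (x + t *\<^sub>R axis i 1)) has_real_derivative D) (at 0) \<Longrightarrow> partial i f x = D"
  unfolding partial_def by (rule DERIV_imp_deriv)

lemma partial_const: "partial i (\<lambda>y. c) x = 0"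
  by (intro partial_eqI DERIV_const)

lemma axis_line_nth: "(x + t *\<^sub>R axis i 1) $ j = x $ j + t * axis i (1::real) $ j"
  by simp

inductive coord_polynomial :: "(real^4 \<Rightarrow> real) \<Rightarrow> bool" where
  const: "coord_polynomial (\<lambda>x. c)"
| coord: "coord_polynomial (\<lambda>x. x $ j)"
| add: "coord_polynomial f \<Longrightarrow> coord_polynomial g \<Longrightarrow> coord_polynomial (\<lambda>x. f x + g x)"
| mult: "coord_polynomial f \<Longrightarrow> coord_polynomial g \<Longrightarrow> coord_polynomial (\<lambda>x. f x * g x)"

lemma coord_polynomial_divide: "coord_polynomial f \<Longrightarrow> coord_polynomial (\<lambda>x. f x / c)"
  using coord_polynomial.mult[OF _ coord_polynomial.const, of f "1 / c"] by simp

lemma coord_polynomial_has_partial: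
  assumes "coord_polynomial f"
  obtains f' where "coord_polynomial f'"
    and "\<And>x. ((\<lambda>t. f (x + t *\<^sub>R axis i 1)) has_real_derivative f' x) (at 0)"
proof -
  from assms have "\<exists>f'. coord_polynomial f' \<and>
    (\<forall>x. ((\<lambda>t. f (x + t *\<^sub>R axis i 1)) has_real_derivative f' x) (at 0))"
  proof (induction rule: coord_polynomial.induct)
    case (const c)
    show ?case by (intro exI[of _ "\<lambda>x. 0"]) (auto intro: coord_polynomial.intros)
  next
    case (coord j)
    have "((\<lambda>t. x $ j + t * axis i 1 $ j) has_real_derivative axis i 1 $ j) (at 0)" for x
      by (auto intro!: derivative_eq_intros)
    then show ?case
      by (intro exI[of _ "\<lambda>x. axis i 1 $ j"]) (auto intro: coord_polynomial.intros)
  next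
    case (add f g)
    then obtain f' g' where "coord_polynomial f'" "coord_polynomial g'"
      "\<forall>x. ((\<lambda>t. f (x + t *\<^sub>R axis i 1)) has_real_derivative f' x) (at 0)"
      "\<forall>x. ((\<lambda>t. g (x + t *\<^sub>R axis i 1)) has_real_derivative g' x) (at 0)" by blast
    then show ?case
      by (intro exI[of _ "\<lambda>x. f' x + g' x"]) (auto intro: coord_polynomial.intros DERIV_add)
  next
    case (mult f g)
    then obtain f' g' where "coord_polynomial f'" "coord_polynomial g'"
      and df: "\<forall>x. ((\<lambda>t. f (x + t *\<^sub>R axis i 1)) has_real_derivative f' x) (at 0)"
      and dg: "\<forall>x. ((\<lambda>t. g (x + t *\<^sub>R axis i 1)) has_real_derivative g' x) (at 0)" by blast
    have "((\<lambda>t. f (x + t *\<^sub>R axis i 1) * g (x + t *\<^sub>R axis i 1))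
        has_real_derivative f' x * g x + f x * g' x) (at 0)" for x
      using DERIV_mult[OF df[rule_format, of x] dg[rule_format, of x]] by (simp add: mult.commute)
    with mult.hyps \<open>coord_polynomial f'\<close> \<open>coord_polynomial g'\<close> show ?case
      by (intro exI[of _ "\<lambda>x. f' x * g x + f x * g' x"]) (auto intro: coord_polynomial.intros)
  qed
  with that show ?thesis by blast
qed

lemma coord_polynomial_partial: "coord_polynomial f \<Longrightarrow> coord_polynomial (partial i f)"
  by (metis coord_polynomial_has_partial partial_eqI ext)

lemma coord_polynomial_differentiable:
  "coord_polynomial f \<Longrightarrow> (\<lambda>t. f (x + t *\<^sub>R axis i 1)) differentiable (at 0)"
  by (metis coord_polynomial_has_partial real_differentiable_def)

lemma coord_polynomial_continuous_on: "coord_polynomial f \<Longrightarrow> continuous_on U f"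
  by (induction rule: coord_polynomial.induct) (auto intro!: continuous_intros)

lemma coord_polynomial_smooth: "coord_polynomial f \<Longrightarrow> smooth_on U f"
proof -
  have "coord_polynomial f \<Longrightarrow> Ck k U f" for k
    by (induction k arbitrary: f)
      (auto simp: coord_polynomial_continuous_on coord_polynomial_differentiable
        coord_polynomial_partial)
  then show "coord_polynomial f \<Longrightarrow> smooth_on U f" by (simp add: smooth_on_def)
qed

lemma matrix_inv_unique:
  fixes A :: "'a::semiring_1^'n^'m" and B :: "'a^'m^'n"
  assumes "A ** B = mat 1" and "B ** A = mat 1"
  shows "matrix_inv A = B"
proof -
  have inv: "A ** matrix_inv A = mat 1 \<and> matrix_inv A ** A = mat 1"
    unfolding matrix_inv_def using assms by (rule someI[where x = B, OF conjI])
  have "matrix_inv A = matrix_inv A ** (A ** B)" using assms by simp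
  also have "\<dots> = (matrix_inv A ** A) ** B" by (simp add: matrix_mul_assoc)
  also have "\<dots> = B" using inv by simp
  finally show ?thesis .
qed

lemma index4_cases:
  fixes i :: 4
  obtains "i = 1" | "i = 2" | "i = 3" | "i = 4"
  using exhaust_4 by blast

context
  fixes a b p q s :: real
begin

definition profile :: "real^4 \<Rightarrow> real" where
  "profile x = x$4 * (a * (x$2)^2 + b * (x$3)^2) + p * (x$2)^2 + 2 * q * x$2 * x$3 + s * (x$3)^2"

definition half_d2_profile :: "real^4 \<Rightarrow> real" where
  "half_d2_profile x = x$4 * a * x$2 + p * x$2 + q * x$3"

definition half_d3_profile :: "real^4 \<Rightarrow> real" where
  "half_d3_profile x = x$4 * b * x$3 + q * x$2 + s * x$3"

definition half_d4_profile :: "real^4 \<Rightarrow> real" where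
  "half_d4_profile x = (a * (x$2)^2 + b * (x$3)^2) / 2"

lemma partial_profile:
  "partial i profile x = 2 * half_d2_profile x * axis i 1 $ 2
     + 2 * half_d3_profile x * axis i 1 $ 3 + 2 * half_d4_profile x * axis i 1 $ 4"
  by (rule partial_eqI, unfold profile_def axis_line_nth)
    (auto intro!: derivative_eq_intros
      simp: half_d2_profile_def half_d3_profile_def half_d4_profile_def algebra_simps power2_eq_square)

lemma partial_half_d_profile:
  "partial i half_d2_profile x = (a * x$4 + p) * axis i 1 $ 2 + q * axis i 1 $ 3 + a * x$2 * axis i 1 $ 4"
  "partial i half_d3_profile x = q * axis i 1 $ 2 + (b * x$4 + s) * axis i 1 $ 3 + b * x$3 * axis i 1 $ 4"
  "partial i half_d4_profile x = a * x$2 * axis i 1 $ 2 + b * x$3 * axis i 1 $ 3"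
  "partial i (\<lambda>y. - half_d2_profile y) x =
     - ((a * x$4 + p) * axis i 1 $ 2 + q * axis i 1 $ 3 + a * x$2 * axis i 1 $ 4)"
  "partial i (\<lambda>y. - half_d3_profile y) x =
     - (q * axis i 1 $ 2 + (b * x$4 + s) * axis i 1 $ 3 + b * x$3 * axis i 1 $ 4)"
  by (rule partial_eqI;
      unfold half_d2_profile_def half_d3_profile_def half_d4_profile_def axis_line_nth;
      auto intro!: derivative_eq_intros simp: algebra_simps)+

lemma euler_identity_profile: "x$2 * half_d2_profile x + x$3 * half_d3_profile x = profile x"
  by (simp add: profile_def half_d2_profile_def half_d3_profile_def algebra_simps power2_eq_square)

lemma soliton_metric_eq_profile:
  "soliton_metric a b p q s = (\<lambda>x. \<chi> i j.
      if (i = 1 \<and> j = 4) \<or> (i = 4 \<and> j = 1) then 1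
      else if i = j \<and> (i = 2 \<or> i = 3) then 1
      else if i = 4 \<and> j = 4 then profile x else 0)"
  by (simp add: soliton_metric_def profile_def fun_eq_iff)

lemma partial_soliton_metric:
  "partial l (\<lambda>y. soliton_metric a b p q s y $ i $ j) x =
     (if i = 4 \<and> j = 4 then partial l profile x else 0)"
proof (cases "i = 4 \<and> j = 4")
  case True
  then show ?thesis by (simp add: soliton_metric_eq_profile)
next
  case False
  then have "(\<lambda>y. soliton_metric a b p q s y $ i $ j) = (\<lambda>y. soliton_metric a b p q s 0 $ i $ j)"
    by (auto simp: soliton_metric_eq_profile)
  then have "partial l (\<lambda>y. soliton_metric a b p q s y $ i $ j) x = 0"
    by (simp only: partial_const)
  with False show ?thesis by auto
qed

definition inverse_soliton_metric :: "real^4 \<Rightarrow> real^4^4" where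
  "inverse_soliton_metric x = (\<chi> i j.
      if i = 1 \<and> j = 1 then - profile x
      else if (i = 1 \<and> j = 4) \<or> (i = 4 \<and> j = 1) then 1
      else if i = j \<and> (i = 2 \<or> i = 3) then 1 else 0)"

lemma metric_inv_soliton_metric:
  "metric_inv (soliton_metric a b p q s) x = inverse_soliton_metric x"
  unfolding metric_inv_def
  by (rule matrix_inv_unique)
    (simp_all add: soliton_metric_eq_profile inverse_soliton_metric_def vec_eq_iff
      matrix_matrix_mult_def mat_def sum_4 forall_4)

definition soliton_christoffel :: "4 \<Rightarrow> 4 \<Rightarrow> 4 \<Rightarrow> real^4 \<Rightarrow> real" where
  "soliton_christoffel k i j =
    (if k = 1 \<and> i = 4 \<and> j = 4 then half_d4_profile
     else if k = 1 \<and> ((i = 2 \<and> j = 4) \<or> (i = 4 \<and> j = 2)) then half_d2_profile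
     else if k = 1 \<and> ((i = 3 \<and> j = 4) \<or> (i = 4 \<and> j = 3)) then half_d3_profile
     else if k = 2 \<and> i = 4 \<and> j = 4 then (\<lambda>x. - half_d2_profile x)
     else if k = 3 \<and> i = 4 \<and> j = 4 then (\<lambda>x. - half_d3_profile x)
     else (\<lambda>x. 0))"

lemma christoffel_soliton_metric: "christoffel (soliton_metric a b p q s) = soliton_christoffel"
proof (intro ext)
  fix k i j x
  show "christoffel (soliton_metric a b p q s) k i j x = soliton_christoffel k i j x"
    unfolding christoffel_def metric_inv_soliton_metric partial_soliton_metric partial_profile sum_4
    by (cases k rule: index4_cases; cases i rule: index4_cases; cases j rule: index4_cases)
      (simp_all add: inverse_soliton_metric_def soliton_christoffel_def axis_def)
qed

lemma ricci_soliton_metric: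
  "ricci (soliton_metric a b p q s) x =
     (\<chi> j k. if j = 4 \<and> k = 4 then - ((a + b) * x$4 + p + s) else 0)"
  unfolding ricci_def riemann_def christoffel_soliton_metric vec_eq_iff forall_4
  by (simp add: sum_4 soliton_christoffel_def partial_const partial_half_d_profile axis_def
      algebra_simps)

definition soliton_field :: "real \<Rightarrow> real^4 \<Rightarrow> real^4" where
  "soliton_field lam x = (\<chi> k.
      if k = 1 then lam * x$1 + (a + b) / 4 * (x$4)^2 + (p + s) / 2 * x$4
      else if k = 2 then lam / 2 * x$2
      else if k = 3 then lam / 2 * x$3
      else 0)"

lemma coord_polynomial_soliton_field: "coord_polynomial (\<lambda>x. soliton_field lam x $ k)"
  by (cases k rule: index4_cases)
    (auto simp: soliton_field_def power2_eq_square
      intro!: coord_polynomial.intros coord_polynomial_divide)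

lemma partial_soliton_field:
  "partial i (\<lambda>y. soliton_field lam y $ k) x =
     (if k = 1 then lam * axis i 1 $ 1 + ((a + b) / 2 * x$4 + (p + s) / 2) * axis i 1 $ 4
      else if k = 2 then lam / 2 * axis i 1 $ 2
      else if k = 3 then lam / 2 * axis i 1 $ 3
      else 0)"
  by (cases k rule: index4_cases; rule partial_eqI; unfold soliton_field_def axis_line_nth;
      auto intro!: derivative_eq_intros simp: field_simps)

lemma soliton_field_equation:
  "lie_deriv (soliton_field lam) (soliton_metric a b p q s) x + ricci (soliton_metric a b p q s) x
     = lam *\<^sub>R soliton_metric a b p q s x"
  unfolding lie_deriv_def partial_soliton_metric partial_profile partial_soliton_field
    ricci_soliton_metric vec_eq_iff forall_4
  by (simp add: sum_4 soliton_metric_eq_profile soliton_field_def axis_def algebra_simps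
      flip: euler_identity_profile)

end

theorem mainTheorem5:
  fixes U :: "(real^4) set" and a b p q s :: real
  assumes "open U" and "a^2 + b^2 \<noteq> 0"
  shows "\<forall>lam::real. \<exists>V :: real^4 \<Rightarrow> real^4.
           (\<forall>k. smooth_on U (\<lambda>x. V x $ k)) \<and>
           (\<forall>x\<in>U. lie_deriv V (soliton_metric a b p q s) x
                    + ricci (soliton_metric a b p q s) x
                  = lam *\<^sub>R soliton_metric a b p q s x)"
  by (intro allI, rule_tac x = "soliton_field a b p s lam" in exI)
    (simp add: coord_polynomial_smooth coord_polynomial_soliton_field soliton_field_equation)

end
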